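(* Let $\mathcal{C}=\mathrm{CSS}(C_X,C_Z)$ be a quantum Tanner code over $\mathbb{F}_q$ built from a group $G$, generating sets $A,B$ with $|A|=|B|=\Delta$, and inner codes $C_A\subseteq\mathbb{F}_q^A$, $C_B\subseteq\mathbb{F}_q^B$, such that (1) the all-ones vector lies in $C_A$ and the all-ones vector lies in $C_B^\perp$, and (2) $n=|G||A||B|$ is relatively prime to $q$. Then the all-ones vector $\mathbf{1}\in\mathbb{F}_q^Q$ lies in $C_Z\setminus C_X^\perp$ and in $C_X\setminus C_Z^\perp$.
   Context: Quantum Tanner code: $G$ is a finite group and $A,B\subseteq G$ with $A=A^{-1}$, $B=B^{-1}$, $|A|=|B|=\Delta$. The face set is $Q=G\times A\times B$, where the face $(g,a,b)$ has vertices $(g,00),(ag,01),(gb,10),(agb,11)$ in $V=G\times\{0,1\}^2$; $n=|Q|$. For each vertex $v$, let $Q(v)$ be the set of faces containing $v$, identified with $A\times B$ by: for $v=(h,00)$, $(a,b)\mapsto(h,a,b)$; for $v=(h,01)$, $(a,b)\mapsto(a^{-1}h,a,b)$; for $v=(h,10)$, $(a,b)\mapsto(hb^{-1},a,b)$; for $v=(h,11)$, $(a,b)\mapsto(a^{-1}hb^{-1},a,b)$. For $x\in\mathbb{F}_q^Q$, its local view $x|_{Q(v)}\in\mathbb{F}_q^{A\times B}$ is the restriction under this identification. For linear codes $C_1\subseteq\mathbb{F}_q^{A}$, $C_2\subseteq\mathbb{F}_q^{B}$, the tensor code $C_1\otimes C_2\subseteq\mathbb{F}_q^{A\times B}$ consists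 of matrices with all columns in $C_1$ and all rows in $C_2$; $(C_1\otimes C_2)^\perp=C_1^\perp\otimes\mathbb{F}_q^B+\mathbb{F}_q^A\otimes C_2^\perp$. Then $C_X=\{x\in\mathbb{F}_q^Q: x|_{Q(v)}\in(C_A\otimes C_B)^\perp\ \forall v\in G\times\{00,11\}\}$ and $C_Z=\{x\in\mathbb{F}_q^Q: x|_{Q(v)}\in(C_A^\perp\otimes C_B^\perp)^\perp\ \forall v\in G\times\{01,10\}\}$; one has $C_X^\perp\subseteq C_Z$. Duals are with respect to the standard bilinear form. *)

theory Defs
  imports "HOL-Algebra.Group"
begin

definition vecs :: "'i set \<Rightarrow> ('i \<Rightarrow> 'f::field) set" where
  "vecs S = {x. \<forall>i. i \<notin> S \<longrightarrow> x i = 0}"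

definition lin_code :: "'i set \<Rightarrow> ('i \<Rightarrow> 'f::field) set \<Rightarrow> bool" where
  "lin_code S C \<longleftrightarrow> C \<subseteq> vecs S \<and> (\<lambda>i. 0) \<in> C \<and>
     (\<forall>x\<in>C. \<forall>y\<in>C. (\<lambda>i. x i + y i) \<in> C) \<and> (\<forall>c. \<forall>x\<in>C. (\<lambda>i. c * x i) \<in> C)"

definition dual :: "'i set \<Rightarrow> ('i \<Rightarrow> 'f::field) set \<Rightarrow> ('i \<Rightarrow> 'f) set" where
  "dual S C = {y \<in> vecs S. \<forall>x\<in>C. (\<Sum>i\<in>S. x i * y i) = 0}"

definition ones :: "'i set \<Rightarrow> 'i \<Rightarrow> 'f::field" where
  "ones S = (\<lambda>i. if i \<in> S then 1 else 0)"

definition tensor :: "'a set \<Rightarrow> 'b set \<Rightarrow> ('a \<Rightarrow> 'f::field) set \<Rightarrow> ('b \<Rightarrow> 'f) set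
     \<Rightarrow> ('a \<times> 'b \<Rightarrow> 'f) set" where
  "tensor A B C1 C2 = {M \<in> vecs (A \<times> B).
     (\<forall>b\<in>B. (\<lambda>a. M (a, b)) \<in> C1) \<and> (\<forall>a\<in>A. (\<lambda>b. M (a, b)) \<in> C2)}"

definition faces :: "('g, 'm) monoid_scheme \<Rightarrow> 'g set \<Rightarrow> 'g set \<Rightarrow> ('g \<times> 'g \<times> 'g) set" where
  "faces G A B = carrier G \<times> A \<times> B"

text \<open>Local views at the four vertex types (h,00), (h,01), (h,10), (h,11).\<close>
definition lv00 :: "('g, 'm) monoid_scheme \<Rightarrow> 'g set \<Rightarrow> 'g set \<Rightarrow> 'g \<Rightarrow> ('g \<times> 'g \<times> 'g \<Rightarrow> 'f::field) \<Rightarrow> ('g \<times> 'g \<Rightarrow> 'f)" where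
  "lv00 G A B h x = (\<lambda>(a, b). if a \<in> A \<and> b \<in> B then x (h, a, b) else 0)"

definition lv01 :: "('g, 'm) monoid_scheme \<Rightarrow> 'g set \<Rightarrow> 'g set \<Rightarrow> 'g \<Rightarrow> ('g \<times> 'g \<times> 'g \<Rightarrow> 'f::field) \<Rightarrow> ('g \<times> 'g \<Rightarrow> 'f)" where
  "lv01 G A B h x = (\<lambda>(a, b). if a \<in> A \<and> b \<in> B then x (inv\<^bsub>G\<^esub> a \<otimes>\<^bsub>G\<^esub> h, a, b) else 0)"

definition lv10 :: "('g, 'm) monoid_scheme \<Rightarrow> 'g set \<Rightarrow> 'g set \<Rightarrow> 'g \<Rightarrow> ('g \<times> 'g \<times> 'g \<Rightarrow> 'f::field) \<Rightarrow> ('g \<times> 'g \<Rightarrow> 'f)" where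
  "lv10 G A B h x = (\<lambda>(a, b). if a \<in> A \<and> b \<in> B then x (h \<otimes>\<^bsub>G\<^esub> inv\<^bsub>G\<^esub> b, a, b) else 0)"

definition lv11 :: "('g, 'm) monoid_scheme \<Rightarrow> 'g set \<Rightarrow> 'g set \<Rightarrow> 'g \<Rightarrow> ('g \<times> 'g \<times> 'g \<Rightarrow> 'f::field) \<Rightarrow> ('g \<times> 'g \<Rightarrow> 'f)" where
  "lv11 G A B h x = (\<lambda>(a, b). if a \<in> A \<and> b \<in> B then x (inv\<^bsub>G\<^esub> a \<otimes>\<^bsub>G\<^esub> h \<otimes>\<^bsub>G\<^esub> inv\<^bsub>G\<^esub> b, a, b) else 0)"

definition CX :: "('g, 'm) monoid_scheme \<Rightarrow> 'g set \<Rightarrow> 'g set \<Rightarrow> ('g \<Rightarrow> 'f::field) set \<Rightarrow> ('g \<Rightarrow> 'f) set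
     \<Rightarrow> ('g \<times> 'g \<times> 'g \<Rightarrow> 'f) set" where
  "CX G A B CA CB = {x \<in> vecs (faces G A B). \<forall>h\<in>carrier G.
      lv00 G A B h x \<in> dual (A \<times> B) (tensor A B CA CB) \<and>
      lv11 G A B h x \<in> dual (A \<times> B) (tensor A B CA CB)}"

definition CZ :: "('g, 'm) monoid_scheme \<Rightarrow> 'g set \<Rightarrow> 'g set \<Rightarrow> ('g \<Rightarrow> 'f::field) set \<Rightarrow> ('g \<Rightarrow> 'f) set
     \<Rightarrow> ('g \<times> 'g \<times> 'g \<Rightarrow> 'f) set" where
  "CZ G A B CA CB = {x \<in> vecs (faces G A B). \<forall>h\<in>carrier G.
      lv01 G A B h x \<in> dual (A \<times> B) (tensor A B (dual A CA) (dual B CB)) \<and>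
      lv10 G A B h x \<in> dual (A \<times> B) (tensor A B (dual A CA) (dual B CB))}"

end

theory Submission
  imports Defs "HOL-Number_Theory.Residues"
begin

text \<open>Every local view of the all-ones vector on the faces is the all-ones matrix on
  \<open>A \<times> B\<close>. Summing the rows of a matrix whose rows lie in \<open>C_B\<close> against the all-ones vector
  of \<open>C_B\<^sup>\<perp>\<close> gives zero, so the all-ones matrix is orthogonal to \<open>C_A \<otimes> C_B\<close>; symmetrically,
  summing the columns shows it is orthogonal to \<open>C_A\<^sup>\<perp> \<otimes> C_B\<^sup>\<perp>\<close>, since the all-ones vector of
  \<open>C_A\<close> is orthogonal to \<open>C_A\<^sup>\<perp>\<close>. Hence \<open>\<one>\<close> lies in \<open>C_X\<close> and in \<open>C_Z\<close>. Its self inner product is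
  \<open>n\<close>, which is nonzero in \<open>\<bbbF>_q\<close> because the characteristic divides \<open>q\<close> and \<open>n\<close> is prime to \<open>q\<close>;
  so \<open>\<one>\<close> is orthogonal to neither code.\<close>

lemma of_nat_neq_0_if_coprime_card:
  assumes "coprime n (card (UNIV :: 'f::{field, finite} set))"
  shows "of_nat n \<noteq> (0::'f)"
proof
  assume "of_nat n = (0::'f)"
  then have "CHAR('f) dvd n"
    by (simp add: of_nat_eq_0_iff_char_dvd)
  with CHAR_dvd_CARD[where 'a='f] assms have "CHAR('f) dvd 1"
    by (metis coprime_common_divisor)
  then show False
    using of_nat_eq_0_iff_char_dvd[of 1, where 'a='f] by simp
qed

lemma ones_in_vecs: "ones S \<in> vecs S"
  by (simp add: vecs_def ones_def)

lemma sum_times_ones: "(\<Sum>i\<in>S. x i * ones S i) = sum x S"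
  by (rule sum.cong) (simp_all add: ones_def)

lemma ones_in_dual_iff: "ones S \<in> dual S C \<longleftrightarrow> (\<forall>x\<in>C. sum x S = 0)"
  by (simp add: dual_def ones_in_vecs sum_times_ones)

lemma subset_dual_dual:
  assumes "C \<subseteq> vecs S"
  shows "C \<subseteq> dual S (dual S C)"
  using assms by (auto simp: dual_def mult.commute)

lemma ones_in_dual_tensor_right:
  assumes "ones B \<in> dual B C2"
  shows "ones (A \<times> B) \<in> dual (A \<times> B) (tensor A B C1 C2)"
proof (unfold ones_in_dual_iff, intro ballI)
  fix M assume "M \<in> tensor A B C1 C2"
  then have "\<forall>a\<in>A. sum (\<lambda>b. M (a, b)) B = 0"
    using assms by (simp add: tensor_def ones_in_dual_iff)
  then show "sum M (A \<times> B) = 0"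
    by (simp add: sum.cartesian_product')
qed

lemma ones_in_dual_tensor_left:
  assumes "ones A \<in> dual A C1"
  shows "ones (A \<times> B) \<in> dual (A \<times> B) (tensor A B C1 C2)"
proof (unfold ones_in_dual_iff, intro ballI)
  fix M assume "M \<in> tensor A B C1 C2"
  then have "\<forall>b\<in>B. sum (\<lambda>a. M (a, b)) A = 0"
    using assms by (simp add: tensor_def ones_in_dual_iff)
  then show "sum M (A \<times> B) = 0"
    by (simp add: sum.cartesian_product' sum.swap[of _ B A])
qed

lemma ones_notin_dual:
  fixes C :: "('i \<Rightarrow> 'f::field) set"
  assumes "ones S \<in> C" and "of_nat (card S) \<noteq> (0::'f)"
  shows "ones S \<notin> dual S C"
proof
  assume "ones S \<in> dual S C"
  with assms(1) have "sum (ones S) S = (0::'f)"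
    unfolding ones_in_dual_iff by blast
  moreover have "sum (ones S) S = (of_nat (card S) :: 'f)"
    by (simp add: ones_def)
  ultimately show False
    using assms(2) by simp
qed

lemma local_views_ones:
  assumes "group G" and "A \<subseteq> carrier G" and "B \<subseteq> carrier G" and "h \<in> carrier G"
  shows "lv00 G A B h (ones (faces G A B)) = ones (A \<times> B)"
    and "lv01 G A B h (ones (faces G A B)) = ones (A \<times> B)"
    and "lv10 G A B h (ones (faces G A B)) = ones (A \<times> B)"
    and "lv11 G A B h (ones (faces G A B)) = ones (A \<times> B)"
proof -
  interpret group G by fact
  show "lv00 G A B h (ones (faces G A B)) = ones (A \<times> B)"
    "lv01 G A B h (ones (faces G A B)) = ones (A \<times> B)"
    "lv10 G A B h (ones (faces G A B)) = ones (A \<times> B)"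
    "lv11 G A B h (ones (faces G A B)) = ones (A \<times> B)"
    using assms(2-4)
    by (auto simp: lv00_def lv01_def lv10_def lv11_def ones_def faces_def fun_eq_iff
        intro!: m_closed)
qed

lemma ones_in_CX:
  assumes "group G" and "A \<subseteq> carrier G" and "B \<subseteq> carrier G"
    and "ones B \<in> dual B CB"
  shows "ones (faces G A B) \<in> CX G A B CA CB"
  by (simp add: CX_def ones_in_vecs local_views_ones[OF assms(1-3)]
      ones_in_dual_tensor_right[OF assms(4)])

lemma ones_in_CZ:
  assumes "group G" and "A \<subseteq> carrier G" and "B \<subseteq> carrier G"
    and "lin_code A CA" and "ones A \<in> CA"
  shows "ones (faces G A B) \<in> CZ G A B CA CB"
proof -
  have "ones A \<in> dual A (dual A CA)"
    using assms(4,5) subset_dual_dual[of CA A] by (auto simp: lin_code_def)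
  then show ?thesis
    by (simp add: CZ_def ones_in_vecs local_views_ones[OF assms(1-3)]
        ones_in_dual_tensor_left)
qed

lemma card_faces: "card (faces G A B) = card (carrier G) * card A * card B"
  by (simp add: faces_def card_cartesian_product)

theorem proposition5p1:
  fixes G :: "('g, 'm) monoid_scheme"
    and A B :: "'g set"
    and CA CB :: "('g \<Rightarrow> 'f::{field, finite}) set"
  assumes "group G" and "finite (carrier G)"
    and "A \<subseteq> carrier G" and "B \<subseteq> carrier G"
    and "\<forall>a\<in>A. inv\<^bsub>G\<^esub> a \<in> A" and "\<forall>b\<in>B. inv\<^bsub>G\<^esub> b \<in> B"
    and "card A = card B"
    and "lin_code A CA" and "lin_code B CB"
    and "ones A \<in> CA" and "ones B \<in> dual B CB"
    and "coprime (card (carrier G) * card A * card B) (card (UNIV :: 'f set))"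
  shows "ones (faces G A B) \<in> CZ G A B CA CB - dual (faces G A B) (CX G A B CA CB)
       \<and> ones (faces G A B) \<in> CX G A B CA CB - dual (faces G A B) (CZ G A B CA CB)"
proof -
  have in_CX: "ones (faces G A B) \<in> CX G A B CA CB"
    using assms(1,3,4,11) by (rule ones_in_CX)
  have in_CZ: "ones (faces G A B) \<in> CZ G A B CA CB"
    using assms(1,3,4,8,10) by (rule ones_in_CZ)
  have n_nonzero: "of_nat (card (faces G A B)) \<noteq> (0::'f)"
    unfolding card_faces using assms(12) by (rule of_nat_neq_0_if_coprime_card)
  show ?thesis
    using in_CX in_CZ ones_notin_dual[OF in_CX n_nonzero] ones_notin_dual[OF in_CZ n_nonzero]
    by blast
qed

end
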